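(* For every integer $n\ge1$: $$\hat d_{1,1}\,P_n(x;q^{\frac12}x_0,q^{\frac12}x_1)=q^{-n-\frac12}(1-q^n)^2P_{n-1}(x;x_0,x_1),$$ $$\hat d_{1,-1}\,P_n(x;q^{\frac12}x_0,q^{-\frac12}x_1)=q^{-n-\frac32}(x_1^2-q^{n+1})^2P_n(x;x_0,x_1),$$ $$\hat d_{-1,1}\,P_n(x;q^{-\frac12}x_0,q^{\frac12}x_1)=q^{-n-\frac32}(x_0^2-q^{n+1})^2P_n(x;x_0,x_1),$$ $$\hat d_{-1,-1}\,P_n(x;q^{-\frac12}x_0,q^{-\frac12}x_1)=q^{-n-\frac52}(x_0^2x_1^2-q^{n+2})^2P_{n+1}(x;x_0,x_1),$$ where the operators $\hat d_{a,b}$ act only in the variable $x$.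
   Context: Let $q$ be a complex parameter with $0<|q|<1$, with a fixed choice of $q^{1/4}$ and $q^{k/4}:=(q^{1/4})^k$; $x,x_0,x_1$ are variables. Notation: $(y)_n=(y;q)_n=\prod_{i=1}^{n}(1-yq^{i-1})$, $(y_1,\dots,y_k)_n=(y_1)_n\cdots(y_k)_n$. For $n\ge0$, $$P_n(x;x_0,x_1)=(-1)^nq^{-\frac n2}\frac{\left(q,\frac{q}{x_0^2},\frac{q}{x_1^2}\right)_n}{\left(\frac{q^{n+1}}{x_0^2x_1^2}\right)_n}\sum_{k=0}^{n}q^k\frac{\left(q^{-n},\frac{q^{n+1}}{x_0^2x_1^2}\right)_k}{\left(q,q,\frac{q}{x_0^2},\frac{q}{x_1^2}\right)_k}\left(-q^{\frac12}x,-q^{\frac12}x^{-1}\right)_k$$ (the Askey–Wilson polynomial with parameters $(a,b,c,d)=(-q^{1/2},-q^{1/2},-q^{1/2}/x_0^2,-q^{1/2}/x_1^2)$). $\eth$ acts by $\eth f(x)=f(q^{1/2}x)$ (with $x_0,x_1$ unchanged); a function written to the left of an operator acts by multiplication after the operator is applied. Let $\omega(x)=\frac{x(1+q^{1/2}x)}{q^{1/2}(1-x^2)(1-q^{1/2}x)}$, $b(x_b,x)=\frac{(q^{1/2}x+x_b^2)(q^{3/2}x+x_b^2)}{q\,x}$, $c(x_b,x)=\frac{(q^{1/2}x+x_b^2)(q^{1/2}+x\,x_b^2)}{q^{1/2}x}$ for $b\in\{0,1\}$, and $$\hat d_{1,1}=\sum_{\epsilon=\pm1}\omega(x^\epsilon)(\eth^{2\epsilon}-1),\quad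 \hat d_{1,-1}=\sum_{\epsilon=\pm1}\omega(x^\epsilon)\big(b(x_1,x^\epsilon)\eth^{2\epsilon}-c(x_1,x)\big),\quad \hat d_{-1,1}=\sum_{\epsilon=\pm1}\omega(x^\epsilon)\big(b(x_0,x^\epsilon)\eth^{2\epsilon}-c(x_0,x)\big),$$ $$\hat d_{-1,-1}=\sum_{\epsilon=\pm1}\omega(x^\epsilon)\big(b(x_0,x^\epsilon)b(x_1,x^\epsilon)\eth^{2\epsilon}-c(x_0,x)c(x_1,x)\big).$$ *)

theory Defs
  imports Complex_Main
begin

text \<open>Throughout, r denotes the fixed choice of q^(1/4), so q = r^4, q^(1/2) = r^2,
  q^(k/4) = r^k.\<close>

definition qpoch :: "complex \<Rightarrow> complex \<Rightarrow> nat \<Rightarrow> complex" where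
  "qpoch q y n = (\<Prod>i<n. (1 - y * q ^ i))"

definition AWP :: "complex \<Rightarrow> nat \<Rightarrow> complex \<Rightarrow> complex \<Rightarrow> complex \<Rightarrow> complex" where
  "AWP r n x x0 x1 =
     (let q = r ^ 4 in
      (-1) ^ n * inverse (r ^ (2 * n)) *
      (qpoch q q n * qpoch q (q / x0\<^sup>2) n * qpoch q (q / x1\<^sup>2) n)
        / qpoch q (q ^ (n + 1) / (x0\<^sup>2 * x1\<^sup>2)) n *
      (\<Sum>k = 0..n. q ^ k *
         (qpoch q (inverse (q ^ n)) k * qpoch q (q ^ (n + 1) / (x0\<^sup>2 * x1\<^sup>2)) k)
         / (qpoch q q k * qpoch q q k * qpoch q (q / x0\<^sup>2) k * qpoch q (q / x1\<^sup>2) k)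
         * (qpoch q (- (r ^ 2) * x) k * qpoch q (- (r ^ 2) * inverse x) k)))"

definition omega :: "complex \<Rightarrow> complex \<Rightarrow> complex" where
  "omega r x = x * (1 + r ^ 2 * x) / (r ^ 2 * (1 - x\<^sup>2) * (1 - r ^ 2 * x))"

definition bcoef :: "complex \<Rightarrow> complex \<Rightarrow> complex \<Rightarrow> complex" where
  "bcoef r xb x = (r ^ 2 * x + xb\<^sup>2) * (r ^ 6 * x + xb\<^sup>2) / (r ^ 4 * x)"

definition ccoef :: "complex \<Rightarrow> complex \<Rightarrow> complex \<Rightarrow> complex" where
  "ccoef r xb x = (r ^ 2 * x + xb\<^sup>2) * (r ^ 2 + x * xb\<^sup>2) / (r ^ 2 * x)"

text \<open>The operators, acting on a function f of x; eth^(2 eps) f (x) = f (q^eps x).\<close>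
definition d_pp :: "complex \<Rightarrow> (complex \<Rightarrow> complex) \<Rightarrow> complex \<Rightarrow> complex" where
  "d_pp r f x = omega r x * (f (r ^ 4 * x) - f x)
              + omega r (inverse x) * (f (x / r ^ 4) - f x)"

definition d_pm :: "complex \<Rightarrow> complex \<Rightarrow> (complex \<Rightarrow> complex) \<Rightarrow> complex \<Rightarrow> complex" where
  "d_pm r x1 f x = omega r x * (bcoef r x1 x * f (r ^ 4 * x) - ccoef r x1 x * f x)
              + omega r (inverse x) * (bcoef r x1 (inverse x) * f (x / r ^ 4) - ccoef r x1 x * f x)"

definition d_mp :: "complex \<Rightarrow> complex \<Rightarrow> (complex \<Rightarrow> complex) \<Rightarrow> complex \<Rightarrow> complex" where
  "d_mp r x0 f x = omega r x * (bcoef r x0 x * f (r ^ 4 * x) - ccoef r x0 x * f x)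
              + omega r (inverse x) * (bcoef r x0 (inverse x) * f (x / r ^ 4) - ccoef r x0 x * f x)"

definition d_mm :: "complex \<Rightarrow> complex \<Rightarrow> complex \<Rightarrow> (complex \<Rightarrow> complex) \<Rightarrow> complex \<Rightarrow> complex" where
  "d_mm r x0 x1 f x =
     omega r x * (bcoef r x0 x * bcoef r x1 x * f (r ^ 4 * x)
                  - ccoef r x0 x * ccoef r x1 x * f x)
   + omega r (inverse x) * (bcoef r x0 (inverse x) * bcoef r x1 (inverse x) * f (x / r ^ 4)
                  - ccoef r x0 x * ccoef r x1 x * f x)"

text \<open>Genericity of parameters: all denominators in the defining formula of
  P m (x; y0, y1) are nonzero (the formula is a rational function; the identities are
  identities of rational functions, checked at generic points).\<close>
definition AW_generic :: "complex \<Rightarrow> nat \<Rightarrow> complex \<Rightarrow> complex \<Rightarrow> bool" where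
  "AW_generic r m y0 y1 \<longleftrightarrow>
     (let q = r ^ 4 in
      y0 \<noteq> 0 \<and> y1 \<noteq> 0 \<and> qpoch q (q / y0\<^sup>2) m \<noteq> 0 \<and> qpoch q (q / y1\<^sup>2) m \<noteq> 0 \<and>
      qpoch q (q ^ (m + 1) / (y0\<^sup>2 * y1\<^sup>2)) m \<noteq> 0)"

end

theory Submission
  imports Defs
begin

(*
  Expanding P_n in the basis phi_k(x) = (-q^(1/2) x, -q^(1/2)/x; q)_k turns each operator into a
  short recurrence: a computation with rational functions of x shows that
  d_{1,1} phi_k = q^(-1) (1 - q^k)^2 phi_(k-1), that d_{1,-1} and d_{-1,1} send phi_k to a
  combination of phi_k and phi_(k-1), and that d_{-1,-1} sends it to a combination of phi_(k+1),
  phi_k and phi_(k-1).  Applying the operator termwise to the terminating 4phi3 series of P_n and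
  collecting the coefficient of each phi_j, every identity becomes a contiguity relation between
  the series coefficients for shifted and unshifted parameters.  These follow from
  (a; q)_(k+1) = (1 - a) (aq; q)_k = (a; q)_k (1 - a q^k) and one rational identity in q^j, q^n
  and x_b^2 for each operator.
*)

section \<open>q-shifted factorials\<close>

lemma qpoch_0 [simp]: "qpoch q a 0 = 1"
  by (simp add: qpoch_def)

lemma qpoch_Suc: "qpoch q a (Suc k) = qpoch q a k * (1 - a * q ^ k)"
  by (simp add: qpoch_def)

lemma qpoch_Suc_shift: "qpoch q a (Suc k) = (1 - a) * qpoch q (a * q) k"
  unfolding qpoch_def by (subst prod.lessThan_Suc_shift) (simp add: mult.assoc)

lemma qpoch_Suc_shift': "a * q = b \<Longrightarrow> qpoch q a (Suc k) = (1 - a) * qpoch q b k"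
  using qpoch_Suc_shift by blast

lemma qpoch_mult_last_eq: "qpoch q a k * (1 - a * q ^ k) = (1 - a) * qpoch q (a * q) k"
  by (metis qpoch_Suc qpoch_Suc_shift)

lemma qpoch_nonzero_mono: "qpoch q a n \<noteq> 0 \<Longrightarrow> j \<le> n \<Longrightarrow> qpoch q a j \<noteq> 0"
  by (auto simp: qpoch_def)

lemma qpoch_nonzero_factor: "qpoch q a n \<noteq> 0 \<Longrightarrow> i < n \<Longrightarrow> 1 - a * q ^ i \<noteq> 0"
  by (auto simp: qpoch_def)

lemma power_ne_one_if_norm_less_one:
  fixes q :: "'a :: real_normed_div_algebra"
  assumes "norm q < 1" "i \<ge> 1"
  shows "q ^ i \<noteq> 1"
proof
  assume "q ^ i = 1"
  then have "norm q ^ i = 1" by (metis norm_one norm_power)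
  moreover have "norm q ^ i < 1" using assms by (simp add: power_less_one_iff)
  ultimately show False by simp
qed

lemma qpoch_q_nonzero: "norm q < 1 \<Longrightarrow> qpoch q q j \<noteq> 0"
  using power_ne_one_if_norm_less_one[of q "Suc _"]
  by (auto simp: qpoch_def power_Suc[symmetric] simp del: power_Suc)

section \<open>The operators and their action on the basis\<close>

definition qdiff_op ::
    "complex \<Rightarrow> (complex \<Rightarrow> complex) \<Rightarrow> (complex \<Rightarrow> complex) \<Rightarrow> (complex \<Rightarrow> complex) \<Rightarrow> complex \<Rightarrow> complex"
  where
  "qdiff_op r b c f x = omega r x * (b x * f (r ^ 4 * x) - c x * f x)
     + omega r (inverse x) * (b (inverse x) * f (x / r ^ 4) - c x * f x)"

lemma d_pp_eq_qdiff_op: "d_pp r f x = qdiff_op r (\<lambda>_. 1) (\<lambda>_. 1) f x"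
  by (simp add: d_pp_def qdiff_op_def)

lemma d_pm_eq_qdiff_op: "d_pm r x1 f x = qdiff_op r (bcoef r x1) (ccoef r x1) f x"
  by (simp add: d_pm_def qdiff_op_def)

lemma d_mp_eq_d_pm: "d_mp r x0 f x = d_pm r x0 f x"
  by (simp add: d_mp_def d_pm_def)

lemma d_mm_eq_qdiff_op:
  "d_mm r x0 x1 f x
     = qdiff_op r (\<lambda>y. bcoef r x0 y * bcoef r x1 y) (\<lambda>y. ccoef r x0 y * ccoef r x1 y) f x"
  by (simp add: d_mm_def qdiff_op_def)

lemma qdiff_op_scale: "qdiff_op r b c (\<lambda>y. a * f y) x = a * qdiff_op r b c f x"
  by (simp add: qdiff_op_def algebra_simps)

lemma qdiff_op_sum: "qdiff_op r b c (\<lambda>y. \<Sum>k\<in>S. f k y) x = (\<Sum>k\<in>S. qdiff_op r b c (f k) x)"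
  by (induction S rule: infinite_finite_induct) (simp_all add: qdiff_op_def algebra_simps)

definition aw_basis :: "complex \<Rightarrow> nat \<Rightarrow> complex \<Rightarrow> complex" where
  "aw_basis r k x = qpoch (r ^ 4) (- (r ^ 2) * x) k * qpoch (r ^ 4) (- (r ^ 2) * inverse x) k"

lemma aw_basis_0 [simp]: "aw_basis r 0 x = 1"
  by (simp add: aw_basis_def)

lemma aw_basis_Suc:
  "aw_basis r (Suc m) x
     = aw_basis r m x * ((1 + r^2 * x * (r^4)^m) * (1 + r^2 * inverse x * (r^4)^m))"
  by (simp add: aw_basis_def qpoch_Suc algebra_simps)

lemma aw_basis_Suc_up:
  assumes "r \<noteq> 0" "x \<noteq> 0"
  shows "(1 + r^2 * x) * aw_basis r (Suc m) (r^4 * x) = aw_basis r m x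
     * ((1 + r^2 * x * (r^4)^m) * (1 + r^2 * x * (r^4)^m * r^4) * (1 + r^2 * inverse x / r^4))"
proof -
  have "qpoch (r^4) (- (r^2) * x) (Suc (Suc m)) = (1 + r^2 * x) * qpoch (r^4) (- (r^2) * (r^4 * x)) (Suc m)"
    by (subst qpoch_Suc_shift) (simp add: algebra_simps)
  then have lhs: "(1 + r^2 * x) * aw_basis r (Suc m) (r^4 * x)
      = qpoch (r^4) (- (r^2) * x) (Suc (Suc m)) * qpoch (r^4) (- (r^2) * inverse (r^4 * x)) (Suc m)"
    by (simp add: aw_basis_def)
  have shift: "qpoch (r^4) (- (r^2) * inverse (r^4 * x)) (Suc m)
      = (1 + r^2 * inverse x / r^4) * qpoch (r^4) (- (r^2) * inverse x) m"
    using assms by (subst qpoch_Suc_shift') (simp_all add: field_simps eval_nat_numeral)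
  show ?thesis
    unfolding lhs shift unfolding qpoch_Suc by (simp add: aw_basis_def algebra_simps)
qed

lemma aw_basis_Suc_down:
  assumes "r \<noteq> 0" "x \<noteq> 0"
  shows "(1 + r^2 * inverse x) * aw_basis r (Suc m) (x / r^4) = aw_basis r m x
     * ((1 + r^2 * inverse x * (r^4)^m) * (1 + r^2 * inverse x * (r^4)^m * r^4) * (1 + r^2 * x / r^4))"
proof -
  have "qpoch (r^4) (- (r^2) * inverse x) (Suc (Suc m))
      = (1 + r^2 * inverse x) * qpoch (r^4) (- (r^2) * inverse (x / r^4)) (Suc m)"
    using assms by (subst qpoch_Suc_shift') (simp_all add: field_simps eval_nat_numeral)
  then have lhs: "(1 + r^2 * inverse x) * aw_basis r (Suc m) (x / r^4)
      = qpoch (r^4) (- (r^2) * inverse x) (Suc (Suc m)) * qpoch (r^4) (- (r^2) * (x / r^4)) (Suc m)"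
    by (simp add: aw_basis_def)
  have shift: "qpoch (r^4) (- (r^2) * (x / r^4)) (Suc m) = (1 + r^2 * x / r^4) * qpoch (r^4) (- (r^2) * x) m"
    using assms by (subst qpoch_Suc_shift') (simp_all add: field_simps eval_nat_numeral)
  show ?thesis
    unfolding lhs shift unfolding qpoch_Suc by (simp add: aw_basis_def algebra_simps)
qed

lemma omega_denominators_nonzero:
  fixes r x :: complex
  assumes "x \<noteq> 0" "x^2 \<noteq> 1" "r^2 * x \<noteq> 1" "r^2 * inverse x \<noteq> 1"
  shows "1 - x^2 \<noteq> 0" "x^2 - 1 \<noteq> 0" "1 - r^2 * x \<noteq> 0" "x - r^2 \<noteq> 0"
proof -
  show "1 - x^2 \<noteq> 0" "x^2 - 1 \<noteq> 0" "1 - r^2 * x \<noteq> 0"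
    using assms(2,3) by (metis right_minus_eq)+
  show "x - r^2 \<noteq> 0"
  proof
    assume "x - r^2 = 0"
    then have "r^2 = x" by simp
    then show False using assms(1,4) by simp
  qed
qed

lemma omega_eq: "omega r x = x / (r^2 * (1 - x^2) * (1 - r^2 * x)) * (1 + r^2 * x)"
  by (simp add: omega_def)

lemma omega_inverse_eq:
  assumes "x \<noteq> 0" "x^2 \<noteq> 1" "r^2 * x \<noteq> 1" "r^2 * inverse x \<noteq> 1"
  shows "omega r (inverse x) = x^2 / (r^2 * (x^2 - 1) * (x - r^2)) * (1 + r^2 * inverse x)"
  using assms(1,2) omega_denominators_nonzero(2,4)[OF assms] unfolding omega_def by (simp add: divide_simps)

(* qdiff_op r b c (aw_basis r (m + 1)) x divided by aw_basis r m x, with t = q^m: the factors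
   1 + q^(1/2) x^(+-1) of omega cancel against the shifted basis elements. *)
definition basis_image_factor ::
    "complex \<Rightarrow> (complex \<Rightarrow> complex) \<Rightarrow> (complex \<Rightarrow> complex) \<Rightarrow> complex \<Rightarrow> complex \<Rightarrow> complex"
  where
  "basis_image_factor r b c x t =
     x / (r^2 * (1 - x^2) * (1 - r^2 * x)) *
       (b x * ((1 + r^2 * x * t) * (1 + r^2 * x * t * r^4) * (1 + r^2 * inverse x / r^4))
        - (1 + r^2 * x) * c x * ((1 + r^2 * x * t) * (1 + r^2 * inverse x * t)))
   + x^2 / (r^2 * (x^2 - 1) * (x - r^2)) *
       (b (inverse x) * ((1 + r^2 * inverse x * t) * (1 + r^2 * inverse x * t * r^4) * (1 + r^2 * x / r^4))
        - (1 + r^2 * inverse x) * c x * ((1 + r^2 * x * t) * (1 + r^2 * inverse x * t)))"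

lemma qdiff_op_aw_basis_Suc:
  assumes "r \<noteq> 0" and x: "x \<noteq> 0" "x^2 \<noteq> 1" "r^2 * x \<noteq> 1" "r^2 * inverse x \<noteq> 1"
  shows "qdiff_op r b c (aw_basis r (Suc m)) x = basis_image_factor r b c x ((r^4)^m) * aw_basis r m x"
proof -
  define W1 where "W1 = x / (r^2 * (1 - x^2) * (1 - r^2 * x))"
  define W2 where "W2 = x^2 / (r^2 * (x^2 - 1) * (x - r^2))"
  have factor: "basis_image_factor r b c x t =
     W1 * (b x * ((1 + r^2 * x * t) * (1 + r^2 * x * t * r^4) * (1 + r^2 * inverse x / r^4))
           - (1 + r^2 * x) * c x * ((1 + r^2 * x * t) * (1 + r^2 * inverse x * t)))
   + W2 * (b (inverse x) * ((1 + r^2 * inverse x * t) * (1 + r^2 * inverse x * t * r^4) * (1 + r^2 * x / r^4))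
           - (1 + r^2 * inverse x) * c x * ((1 + r^2 * x * t) * (1 + r^2 * inverse x * t)))" for t
    unfolding basis_image_factor_def W1_def W2_def ..
  have "qdiff_op r b c (aw_basis r (Suc m)) x =
      W1 * b x * ((1 + r^2 * x) * aw_basis r (Suc m) (r^4 * x))
    - W1 * (1 + r^2 * x) * c x * aw_basis r (Suc m) x
    + W2 * b (inverse x) * ((1 + r^2 * inverse x) * aw_basis r (Suc m) (x / r^4))
    - W2 * (1 + r^2 * inverse x) * c x * aw_basis r (Suc m) x"
    unfolding qdiff_op_def omega_inverse_eq[OF x] unfolding omega_eq W1_def[symmetric] W2_def[symmetric]
    by (simp add: algebra_simps)
  also have "\<dots> = basis_image_factor r b c x ((r^4)^m) * aw_basis r m x"
    unfolding aw_basis_Suc_up[OF assms(1) x(1)] aw_basis_Suc_down[OF assms(1) x(1)]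
    unfolding aw_basis_Suc factor by (simp add: algebra_simps)
  finally show ?thesis .
qed

(* Coefficients of the recurrences on the basis, as functions of X = x_b^2 and Q = q^k. *)
definition alpha_pm :: "complex \<Rightarrow> complex \<Rightarrow> complex \<Rightarrow> complex" where
  "alpha_pm r X Q = (X - r^4 * Q)^2 / (Q * r^6)"

definition beta_pm :: "complex \<Rightarrow> complex \<Rightarrow> complex \<Rightarrow> complex" where
  "beta_pm r X Q = - ((1 - Q)^2 * (X - Q) * (X - r^4 * Q)) / (Q * r^6)"

definition gamma_mm :: "complex \<Rightarrow> complex \<Rightarrow> complex \<Rightarrow> complex \<Rightarrow> complex" where
  "gamma_mm q X0 X1 Q = (X0 * X1 - q^2 * Q)^2 / (q^3 * Q^2)"

definition alpha_mm :: "complex \<Rightarrow> complex \<Rightarrow> complex \<Rightarrow> complex \<Rightarrow> complex" where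
  "alpha_mm q X0 X1 Q =
     (2*q*Q^3 - (q + q^2)*Q^4 + (-2*Q^2 + (1 + q)*Q^3)*(X0 + X1)
      + (2*Q/q - 2*(1 + q)*Q^2/q + 2*Q^3)*X0*X1
      + ((1 + q)*Q/q^2 - 2*Q^2/q)*X0*X1*(X0 + X1) + (-(1 + q)/q^3 + 2*Q/q^2)*X0^2*X1^2) / Q^2"

definition beta_mm :: "complex \<Rightarrow> complex \<Rightarrow> complex \<Rightarrow> complex \<Rightarrow> complex" where
  "beta_mm q X0 X1 Q = (1 - Q)^2 * (X0 - Q) * (X0 - q*Q) * (X1 - Q) * (X1 - q*Q) / (q^2 * Q^2)"

lemma basis_image_factor_pp:
  assumes "r \<noteq> 0" and x: "x \<noteq> 0" "x^2 \<noteq> 1" "r^2 * x \<noteq> 1" "r^2 * inverse x \<noteq> 1"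
  shows "basis_image_factor r (\<lambda>_. 1) (\<lambda>_. 1) x t = (1 - r^4 * t)^2 / r^4"
  using assms omega_denominators_nonzero[OF x]
  by (simp add: basis_image_factor_def divide_simps) algebra

lemma basis_image_factor_pm:
  assumes "r \<noteq> 0" "t \<noteq> 0" and x: "x \<noteq> 0" "x^2 \<noteq> 1" "r^2 * x \<noteq> 1" "r^2 * inverse x \<noteq> 1"
  shows "basis_image_factor r (bcoef r x1) (ccoef r x1) x t
     = alpha_pm r (x1^2) (r^4 * t) * ((1 + r^2 * x * t) * (1 + r^2 * inverse x * t))
       + beta_pm r (x1^2) (r^4 * t)"
  using assms omega_denominators_nonzero[OF x]
  by (simp add: basis_image_factor_def alpha_pm_def beta_pm_def bcoef_def ccoef_def divide_simps) algebra

lemma basis_image_factor_mm: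
  assumes "r \<noteq> 0" "t \<noteq> 0" and x: "x \<noteq> 0" "x^2 \<noteq> 1" "r^2 * x \<noteq> 1" "r^2 * inverse x \<noteq> 1"
  shows "basis_image_factor r (\<lambda>y. bcoef r x0 y * bcoef r x1 y) (\<lambda>y. ccoef r x0 y * ccoef r x1 y) x t
     = gamma_mm (r^4) (x0^2) (x1^2) (r^4 * t)
         * ((1 + r^2 * x * t) * (1 + r^2 * inverse x * t)
            * ((1 + r^2 * x * (r^4 * t)) * (1 + r^2 * inverse x * (r^4 * t))))
       + alpha_mm (r^4) (x0^2) (x1^2) (r^4 * t) * ((1 + r^2 * x * t) * (1 + r^2 * inverse x * t))
       + beta_mm (r^4) (x0^2) (x1^2) (r^4 * t)"
  using assms omega_denominators_nonzero[OF x]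
  by (simp add: basis_image_factor_def gamma_mm_def alpha_mm_def beta_mm_def bcoef_def ccoef_def
      divide_simps) algebra

lemma d_pp_aw_basis:
  assumes "r \<noteq> 0" and x: "x \<noteq> 0" "x^2 \<noteq> 1" "r^2 * x \<noteq> 1" "r^2 * inverse x \<noteq> 1"
  shows "d_pp r (aw_basis r k) x = (1 - (r^4)^k)^2 / r^4 * aw_basis r (k - 1) x"
proof (cases k)
  case 0
  then show ?thesis by (simp add: d_pp_def)
next
  case (Suc m)
  then show ?thesis
    by (simp add: d_pp_eq_qdiff_op qdiff_op_aw_basis_Suc[OF assms] basis_image_factor_pp[OF assms])
qed

lemma qdiff_op_pm_aw_basis_0:
  assumes x: "x \<noteq> 0" "x^2 \<noteq> 1" "r^2 * x \<noteq> 1" "r^2 * inverse x \<noteq> 1"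
  shows "qdiff_op r (bcoef r x1) (ccoef r x1) (aw_basis r 0) x = alpha_pm r (x1^2) 1"
  unfolding qdiff_op_def omega_inverse_eq[OF x] unfolding omega_eq
  using x omega_denominators_nonzero[OF x]
  by (simp add: bcoef_def ccoef_def alpha_pm_def divide_simps) algebra

lemma d_pm_aw_basis:
  assumes "r \<noteq> 0" and x: "x \<noteq> 0" "x^2 \<noteq> 1" "r^2 * x \<noteq> 1" "r^2 * inverse x \<noteq> 1"
  shows "d_pm r x1 (aw_basis r k) x
     = alpha_pm r (x1^2) ((r^4)^k) * aw_basis r k x + beta_pm r (x1^2) ((r^4)^k) * aw_basis r (k - 1) x"
proof (cases k)
  case 0
  then show ?thesis
    by (simp add: d_pm_eq_qdiff_op qdiff_op_pm_aw_basis_0[OF x] beta_pm_def)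
next
  case (Suc m)
  have "(r^4)^m \<noteq> 0" using assms by simp
  then show ?thesis
    using Suc by (simp add: d_pm_eq_qdiff_op qdiff_op_aw_basis_Suc[OF assms]
        basis_image_factor_pm[OF assms(1) _ x] aw_basis_Suc algebra_simps)
qed

lemma qdiff_op_mm_aw_basis_0:
  assumes "r \<noteq> 0" and x: "x \<noteq> 0" "x^2 \<noteq> 1" "r^2 * x \<noteq> 1" "r^2 * inverse x \<noteq> 1"
  shows "qdiff_op r (\<lambda>y. bcoef r x0 y * bcoef r x1 y) (\<lambda>y. ccoef r x0 y * ccoef r x1 y) (aw_basis r 0) x
     = gamma_mm (r^4) (x0^2) (x1^2) 1 * aw_basis r 1 x + alpha_mm (r^4) (x0^2) (x1^2) 1"
proof -
  have "aw_basis r 1 x = (1 + r^2 * x) * (1 + r^2 * inverse x)"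
    using aw_basis_Suc[of r 0 x] by simp
  then show ?thesis
    unfolding qdiff_op_def omega_inverse_eq[OF x] unfolding omega_eq
    using assms omega_denominators_nonzero[OF x]
    by (simp add: bcoef_def ccoef_def gamma_mm_def alpha_mm_def divide_simps) algebra
qed

lemma d_mm_aw_basis:
  assumes "r \<noteq> 0" and x: "x \<noteq> 0" "x^2 \<noteq> 1" "r^2 * x \<noteq> 1" "r^2 * inverse x \<noteq> 1"
  shows "d_mm r x0 x1 (aw_basis r k) x
     = gamma_mm (r^4) (x0^2) (x1^2) ((r^4)^k) * aw_basis r (Suc k) x
       + alpha_mm (r^4) (x0^2) (x1^2) ((r^4)^k) * aw_basis r k x
       + beta_mm (r^4) (x0^2) (x1^2) ((r^4)^k) * aw_basis r (k - 1) x"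
proof (cases k)
  case 0
  then show ?thesis
    by (simp add: d_mm_eq_qdiff_op qdiff_op_mm_aw_basis_0[OF assms] beta_mm_def)
next
  case (Suc m)
  have "(r^4)^m \<noteq> 0" using assms by simp
  then show ?thesis
    using Suc by (simp add: d_mm_eq_qdiff_op qdiff_op_aw_basis_Suc[OF assms]
        basis_image_factor_mm[OF assms(1) _ x] aw_basis_Suc algebra_simps)
qed

section \<open>The series expansion of P_n\<close>

definition aw_prefactor :: "complex \<Rightarrow> nat \<Rightarrow> complex \<Rightarrow> complex \<Rightarrow> complex" where
  "aw_prefactor r n y0 y1 = (-1) ^ n * inverse (r ^ (2 * n)) *
     (qpoch (r^4) (r^4) n * qpoch (r^4) (r^4 / y0^2) n * qpoch (r^4) (r^4 / y1^2) n)
     / qpoch (r^4) ((r^4) ^ (n + 1) / (y0^2 * y1^2)) n"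

definition aw_coeff :: "complex \<Rightarrow> nat \<Rightarrow> complex \<Rightarrow> complex \<Rightarrow> nat \<Rightarrow> complex" where
  "aw_coeff r n y0 y1 k = (r^4) ^ k *
     (qpoch (r^4) (inverse ((r^4) ^ n)) k * qpoch (r^4) ((r^4) ^ (n + 1) / (y0^2 * y1^2)) k)
     / (qpoch (r^4) (r^4) k * qpoch (r^4) (r^4) k * qpoch (r^4) (r^4 / y0^2) k * qpoch (r^4) (r^4 / y1^2) k)"

lemma AWP_eq_sum:
  "AWP r n x y0 y1 = aw_prefactor r n y0 y1 * (\<Sum>k = 0..n. aw_coeff r n y0 y1 k * aw_basis r k x)"
  unfolding AWP_def aw_prefactor_def aw_coeff_def aw_basis_def Let_def by (simp add: mult.assoc)

lemma AWP_swap: "AWP r n x y0 y1 = AWP r n x y1 y0"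
  unfolding AWP_def Let_def by (simp add: ac_simps)

lemma AW_generic_swap: "AW_generic r n y0 y1 = AW_generic r n y1 y0"
  unfolding AW_generic_def Let_def by (auto simp: ac_simps)

lemma aw_coeff_0 [simp]: "aw_coeff r n y0 y1 0 = 1"
  by (simp add: aw_coeff_def)

lemma aw_coeff_eq_0: "r \<noteq> 0 \<Longrightarrow> n < k \<Longrightarrow> aw_coeff r n y0 y1 k = 0"
  unfolding aw_coeff_def qpoch_def by (auto intro!: prod_zero bexI[of _ n])

definition aw_coeff_ratio :: "complex \<Rightarrow> nat \<Rightarrow> complex \<Rightarrow> complex \<Rightarrow> complex \<Rightarrow> complex" where
  "aw_coeff_ratio r n y0 y1 t =
     r^4 * (1 - inverse ((r^4)^n) * t) * (1 - r^4 * (r^4)^n / (y0^2 * y1^2) * t)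
     / ((1 - r^4 * t) * (1 - r^4 * t) * (1 - r^4 / y0^2 * t) * (1 - r^4 / y1^2 * t))"

lemma aw_coeff_Suc: "aw_coeff r n y0 y1 (Suc k) = aw_coeff r n y0 y1 k * aw_coeff_ratio r n y0 y1 ((r^4)^k)"
  unfolding aw_coeff_def aw_coeff_ratio_def qpoch_Suc
  by (simp add: divide_inverse inverse_mult_distrib mult_ac)

lemma AW_generic_nonzero: "AW_generic r n y0 y1 \<Longrightarrow> y0 \<noteq> 0 \<and> y1 \<noteq> 0"
  by (simp add: AW_generic_def Let_def)

lemma AW_generic_factor_nonzero:
  assumes "AW_generic r n y0 y1" "i < n"
  shows "1 - r^4 / y0^2 * (r^4)^i \<noteq> 0" "1 - r^4 / y1^2 * (r^4)^i \<noteq> 0"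
    "1 - (r^4)^(n + 1) / (y0^2 * y1^2) * (r^4)^i \<noteq> 0"
proof -
  have g: "qpoch (r^4) (r^4 / y0^2) n \<noteq> 0" "qpoch (r^4) (r^4 / y1^2) n \<noteq> 0"
    "qpoch (r^4) ((r^4)^(n + 1) / (y0^2 * y1^2)) n \<noteq> 0"
    using assms(1) by (simp_all add: AW_generic_def Let_def)
  show "1 - r^4 / y0^2 * (r^4)^i \<noteq> 0" by (rule qpoch_nonzero_factor[OF g(1) assms(2)])
  show "1 - r^4 / y1^2 * (r^4)^i \<noteq> 0" by (rule qpoch_nonzero_factor[OF g(2) assms(2)])
  show "1 - (r^4)^(n + 1) / (y0^2 * y1^2) * (r^4)^i \<noteq> 0" by (rule qpoch_nonzero_factor[OF g(3) assms(2)])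
qed

lemma power2_r2_mult: "(r^2 * y)^2 = r^4 * y^2" for r y :: complex
  by (simp add: power_mult_distrib flip: power_mult)

lemma aw_params_raise:
  fixes r y y0 y1 :: complex
  assumes "r \<noteq> 0"
  shows "r^4 / (r^2 * y)^2 = 1 / y^2"
    and "(r^4)^(Suc m + 1) / ((r^2 * y0)^2 * (r^2 * y1)^2) = (r^4)^m / (y0^2 * y1^2)"
proof -
  show "r^4 / (r^2 * y)^2 = 1 / y^2"
    using assms unfolding power2_r2_mult by simp
  have "(r^4)^(Suc m + 1) = (r^4 * r^4) * (r^4)^m"
    by simp
  moreover have "(r^2 * y0)^2 * (r^2 * y1)^2 = (r^4 * r^4) * (y0^2 * y1^2)"
    unfolding power2_r2_mult by (simp add: mult_ac)
  ultimately show "(r^4)^(Suc m + 1) / ((r^2 * y0)^2 * (r^2 * y1)^2) = (r^4)^m / (y0^2 * y1^2)"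
    using assms by simp
qed

lemma aw_prefactor_Suc_raise:
  assumes "r \<noteq> 0"
  shows "aw_prefactor r (Suc m) (r^2 * y0) (r^2 * y1) = aw_prefactor r m y0 y1
     * (- (1 - r^4 * (r^4)^m) * (1 - 1 / y0^2) * (1 - 1 / y1^2) / (r^2 * (1 - (r^4)^m / (y0^2 * y1^2))))"
proof -
  have shift: "qpoch (r^4) (1 / y^2) (Suc m) = (1 - 1 / y^2) * qpoch (r^4) (r^4 / y^2) m" for y
    by (rule qpoch_Suc_shift') simp
  have shift_w: "qpoch (r^4) ((r^4)^m / (y0^2 * y1^2)) (Suc m)
      = (1 - (r^4)^m / (y0^2 * y1^2)) * qpoch (r^4) ((r^4)^(m + 1) / (y0^2 * y1^2)) m"
    by (rule qpoch_Suc_shift') (simp add: field_simps)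
  show ?thesis
    unfolding aw_prefactor_def aw_params_raise[OF assms]
    unfolding shift shift_w qpoch_Suc[of "r^4" "r^4" m]
    by (simp add: divide_inverse inverse_mult_distrib mult_ac del: power_Suc)
      (simp add: algebra_simps power2_eq_square inverse_mult_distrib)
qed

lemma aw_coeff_Suc_raise:
  assumes "r \<noteq> 0"
  shows "aw_coeff r (Suc m) (r^2 * y0) (r^2 * y1) (Suc j) = aw_coeff r m y0 y1 j
     * (r^4 * (1 - inverse ((r^4)^(Suc m))) * (1 - (r^4)^m / (y0^2 * y1^2))
        / ((1 - r^4 * (r^4)^j)^2 * (1 - 1 / y0^2) * (1 - 1 / y1^2)))"
proof -
  have shift: "qpoch (r^4) (1 / y^2) (Suc j) = (1 - 1 / y^2) * qpoch (r^4) (r^4 / y^2) j" for y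
    by (rule qpoch_Suc_shift') simp
  have shift_w: "qpoch (r^4) ((r^4)^m / (y0^2 * y1^2)) (Suc j)
      = (1 - (r^4)^m / (y0^2 * y1^2)) * qpoch (r^4) ((r^4)^(m + 1) / (y0^2 * y1^2)) j"
    by (rule qpoch_Suc_shift') (simp add: field_simps)
  have shift_v: "qpoch (r^4) (inverse ((r^4)^(Suc m))) (Suc j)
      = (1 - inverse ((r^4)^(Suc m))) * qpoch (r^4) (inverse ((r^4)^m)) j"
    using assms by (intro qpoch_Suc_shift') (simp add: field_simps)
  show ?thesis
    unfolding aw_coeff_def aw_params_raise[OF assms]
    unfolding shift shift_w shift_v qpoch_Suc[of "r^4" "r^4" j]
    by (simp add: divide_inverse inverse_mult_distrib mult_ac power2_eq_square)
qed

section \<open>The operator d_{1,1}\<close>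

lemma pp_coeff_identity:
  assumes "r \<noteq> 0" "norm (r^4) < 1" and gen: "AW_generic r (Suc m) (r^2 * x0) (r^2 * x1)"
  shows "aw_prefactor r (Suc m) (r^2 * x0) (r^2 * x1)
       * (aw_coeff r (Suc m) (r^2 * x0) (r^2 * x1) (Suc j) * ((1 - (r^4)^(Suc j))^2 / r^4))
     = inverse (r ^ (4 * Suc m + 2)) * (1 - r ^ (4 * Suc m))^2 * (aw_prefactor r m x0 x1 * aw_coeff r m x0 x1 j)"
proof -
  define T where "T = (r^4)^m"
  define A0 where "A0 = 1 - 1 / x0^2"
  define A1 where "A1 = 1 - 1 / x1^2"
  define W where "W = 1 - T / (x0^2 * x1^2)"
  define E where "E = 1 - r^4 * (r^4)^j"
  have "A0 \<noteq> 0" "A1 \<noteq> 0" "W \<noteq> 0"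
    using AW_generic_factor_nonzero[OF gen, of 0, unfolded aw_params_raise[OF assms(1)]]
    by (simp_all add: A0_def A1_def W_def T_def)
  moreover have "E \<noteq> 0" "T \<noteq> 0"
    using power_ne_one_if_norm_less_one[of "r^4" "Suc j"] assms by (auto simp: E_def T_def)
  moreover have "r ^ (4 * Suc m) = r^4 * T"
    unfolding T_def by (simp only: power_mult power_Suc)
  then have K: "inverse (r ^ (4 * Suc m + 2)) * (1 - r ^ (4 * Suc m))^2 = (1 - r^4 * T)^2 / (r^4 * T * r^2)"
    unfolding power_add by (simp add: divide_inverse mult.commute)
  moreover have Esq: "(1 - (r^4)^(Suc j))^2 = E^2"
    by (simp add: E_def)
  ultimately show ?thesis
    unfolding K Esq aw_prefactor_Suc_raise[OF assms(1)] aw_coeff_Suc_raise[OF assms(1)] power_Suc[of "r^4" m]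
    unfolding T_def[symmetric] A0_def[symmetric] A1_def[symmetric] W_def[symmetric] E_def[symmetric]
    using assms(1) by (simp add: field_simps) algebra
qed

lemma d_pp_AWP:
  assumes "r \<noteq> 0" "norm (r^4) < 1" and x: "x \<noteq> 0" "x^2 \<noteq> 1" "r^2 * x \<noteq> 1" "r^2 * inverse x \<noteq> 1"
    and gen: "AW_generic r (Suc m) (r^2 * x0) (r^2 * x1)"
  shows "d_pp r (\<lambda>y. AWP r (Suc m) y (r^2 * x0) (r^2 * x1)) x
     = inverse (r ^ (4 * Suc m + 2)) * (1 - r ^ (4 * Suc m))^2 * AWP r m x x0 x1"
proof -
  let ?P = "aw_prefactor r (Suc m) (r^2 * x0) (r^2 * x1)"
  let ?c = "aw_coeff r (Suc m) (r^2 * x0) (r^2 * x1)"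
  let ?K = "inverse (r ^ (4 * Suc m + 2)) * (1 - r ^ (4 * Suc m))^2"
  have "d_pp r (\<lambda>y. AWP r (Suc m) y (r^2 * x0) (r^2 * x1)) x
      = ?P * (\<Sum>k = 0..Suc m. ?c k * d_pp r (aw_basis r k) x)"
    unfolding AWP_eq_sum d_pp_eq_qdiff_op qdiff_op_scale qdiff_op_sum ..
  also have "\<dots> = ?P * (\<Sum>k = 0..Suc m. ?c k * ((1 - (r^4)^k)^2 / r^4 * aw_basis r (k - 1) x))"
    unfolding d_pp_aw_basis[OF assms(1) x] ..
  also have "\<dots> = (\<Sum>j = 0..m. ?P * (?c (Suc j) * ((1 - (r^4)^(Suc j))^2 / r^4)) * aw_basis r j x)"
    by (simp add: sum.atLeast0_atMost_Suc_shift sum_distrib_left mult.assoc del: sum.cl_ivl_Suc)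
  also have "\<dots> = (\<Sum>j = 0..m. ?K * (aw_prefactor r m x0 x1 * aw_coeff r m x0 x1 j) * aw_basis r j x)"
    unfolding pp_coeff_identity[OF assms(1,2) gen] ..
  also have "\<dots> = ?K * AWP r m x x0 x1"
    unfolding AWP_eq_sum by (simp add: sum_distrib_left mult.assoc)
  finally show ?thesis .
qed

section \<open>The operators d_{1,-1} and d_{-1,1}\<close>

lemma aw_params_pm:
  fixes r x0 x1 :: complex
  assumes "r \<noteq> 0"
  shows "r^4 / (x1 / r^2)^2 = r^4 * (r^4 / x1^2)"
    and "(r^4)^(n + 1) / ((r^2 * x0)^2 * (x1 / r^2)^2) = (r^4)^(n + 1) / (x0^2 * x1^2)"
  using assms by (simp_all add: power_divide power_mult_distrib flip: power_mult)

lemma aw_prefactor_pm_shift: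
  assumes "r \<noteq> 0"
  shows "aw_prefactor r n (r^2 * x0) (x1 / r^2) * ((1 - (r^4)^n / x0^2) * (1 - r^4 / x1^2))
     = aw_prefactor r n x0 x1 * ((1 - 1 / x0^2) * (1 - r^4 / x1^2 * (r^4)^n))"
proof -
  have a0: "qpoch (r^4) (1 / x0^2) n * (1 - (r^4)^n / x0^2) = (1 - 1 / x0^2) * qpoch (r^4) (r^4 / x0^2) n"
    using qpoch_mult_last_eq[of "r^4" "1 / x0^2" n] by simp
  have b1: "qpoch (r^4) (r^4 * (r^4 / x1^2)) n * (1 - r^4 / x1^2)
      = qpoch (r^4) (r^4 / x1^2) n * (1 - r^4 / x1^2 * (r^4)^n)"
    using qpoch_mult_last_eq[of "r^4" "r^4 / x1^2" n] by (simp add: mult.commute)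
  let ?e = "(-1) ^ n * inverse (r ^ (2 * n)) * qpoch (r^4) (r^4) n
    / qpoch (r^4) ((r^4)^(n + 1) / (x0^2 * x1^2)) n"
  have "aw_prefactor r n (r^2 * x0) (x1 / r^2) * ((1 - (r^4)^n / x0^2) * (1 - r^4 / x1^2))
      = ?e * ((qpoch (r^4) (1 / x0^2) n * (1 - (r^4)^n / x0^2))
              * (qpoch (r^4) (r^4 * (r^4 / x1^2)) n * (1 - r^4 / x1^2)))"
    unfolding aw_prefactor_def aw_params_raise(1)[OF assms] aw_params_pm[OF assms] by (simp add: mult_ac)
  also have "\<dots> = ?e * (((1 - 1 / x0^2) * qpoch (r^4) (r^4 / x0^2) n)
              * (qpoch (r^4) (r^4 / x1^2) n * (1 - r^4 / x1^2 * (r^4)^n)))"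
    unfolding a0 b1 ..
  also have "\<dots> = aw_prefactor r n x0 x1 * ((1 - 1 / x0^2) * (1 - r^4 / x1^2 * (r^4)^n))"
    unfolding aw_prefactor_def by (simp add: mult_ac)
  finally show ?thesis .
qed

(* Denominators only need to be nonzero below the top index: at t = T = q^n the ratio of
   consecutive coefficients vanishes through its factor 1 - t/T. *)
lemma pm_rational_identity:
  fixes r t T X0 X1 :: complex
  assumes "r \<noteq> 0" "t \<noteq> 0" "T \<noteq> 0" "X0 \<noteq> 0" "X1 \<noteq> 0" "1 - r^4 * t \<noteq> 0"
    and "t \<noteq> T \<Longrightarrow> 1 - 1 / X0 * t \<noteq> 0 \<and> 1 - r^4 * (r^4 / X1) * t \<noteq> 0"
  shows "(1 - r^4 / X1 * T) * (1 - t / X0)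
       * (alpha_pm r X1 t
          + r^4 * (1 - inverse T * t) * (1 - r^4 * T / (X0 * X1) * t)
            / ((1 - r^4 * t) * (1 - r^4 * t) * (1 - 1 / X0 * t) * (1 - r^4 * (r^4 / X1) * t))
            * beta_pm r X1 (r^4 * t))
     = (X1 - r^4 * T)^2 / (T * r^4 * r^2) * ((1 - T / X0) * (1 - r^4 / X1 * t))"
proof (cases "t = T")
  case True
  then show ?thesis
    using assms(1,3,5) by (simp add: alpha_pm_def field_simps)
next
  case False
  then have "1 - 1 / X0 * t \<noteq> 0" "1 - r^4 * (r^4 / X1) * t \<noteq> 0"
    using assms(7) by auto
  then show ?thesis
    using assms(1-6) by (simp add: alpha_pm_def beta_pm_def divide_simps) (simp add: algebra_simps power2_eq_square)
qed

lemma aw_coeff_pm_shift: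
  assumes "r \<noteq> 0" "norm (r^4) < 1"
    and A: "qpoch (r^4) (1 / x0^2) j \<noteq> 0" and C: "qpoch (r^4) (r^4 * (r^4 / x1^2)) j \<noteq> 0"
    and B: "qpoch (r^4) (r^4 / x0^2) j \<noteq> 0" and D: "qpoch (r^4) (r^4 / x1^2) j \<noteq> 0"
  shows "aw_coeff r n (r^2 * x0) (x1 / r^2) j * ((1 - 1 / x0^2) * (1 - r^4 / x1^2 * (r^4)^j))
     = aw_coeff r n x0 x1 j * ((1 - (r^4)^j / x0^2) * (1 - r^4 / x1^2))"
proof -
  have a0: "1 - 1 / x0^2 = qpoch (r^4) (1 / x0^2) j * (1 - (r^4)^j / x0^2) / qpoch (r^4) (r^4 / x0^2) j"
    using qpoch_mult_last_eq[of "r^4" "1 / x0^2" j] B by (simp add: field_simps)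
  have b1: "1 - r^4 / x1^2 * (r^4)^j
      = qpoch (r^4) (r^4 * (r^4 / x1^2)) j * (1 - r^4 / x1^2) / qpoch (r^4) (r^4 / x1^2) j"
    using qpoch_mult_last_eq[of "r^4" "r^4 / x1^2" j] D by (simp add: field_simps)
  have cancel: "N / (Q * Q * A' * C') * (A' * u / B' * (C' * v / D')) = N / (Q * Q * B' * D') * (u * v)"
    if "A' \<noteq> 0" "B' \<noteq> 0" "C' \<noteq> 0" "D' \<noteq> 0" "Q \<noteq> 0" for N Q A' B' C' D' u v :: complex
    using that by (simp add: field_simps)
  show ?thesis
    unfolding aw_coeff_def aw_params_raise(1)[OF assms(1)] aw_params_pm[OF assms(1)] a0 b1
    using A B C D qpoch_q_nonzero[OF assms(2), of j] by (rule cancel)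
qed

lemma aw_prefactor_coeff_pm_shift:
  assumes r: "r \<noteq> 0" "norm (r^4) < 1"
    and gY: "AW_generic r n (r^2 * x0) (x1 / r^2)" and gX: "AW_generic r n x0 x1"
    and n: "n \<ge> 1" and j: "j \<le> n"
  shows "aw_prefactor r n (r^2 * x0) (x1 / r^2) * aw_coeff r n (r^2 * x0) (x1 / r^2) j
       * ((1 - (r^4)^n / x0^2) * (1 - r^4 / x1^2 * (r^4)^j))
     = aw_prefactor r n x0 x1 * aw_coeff r n x0 x1 j * ((1 - r^4 / x1^2 * (r^4)^n) * (1 - (r^4)^j / x0^2))"
proof -
  have gY': "qpoch (r^4) (1 / x0^2) n \<noteq> 0" "qpoch (r^4) (r^4 * (r^4 / x1^2)) n \<noteq> 0"
    using gY unfolding AW_generic_def Let_def aw_params_raise(1)[OF r(1)] aw_params_pm[OF r(1)] by simp_all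
  have gX': "qpoch (r^4) (r^4 / x0^2) n \<noteq> 0" "qpoch (r^4) (r^4 / x1^2) n \<noteq> 0"
    using gX unfolding AW_generic_def Let_def by simp_all
  have yz: "(1 - 1 / x0^2) * (1 - r^4 / x1^2) \<noteq> 0"
    using qpoch_nonzero_factor[OF gY'(1), of 0] qpoch_nonzero_factor[OF gX'(2), of 0] n by simp
  have "aw_prefactor r n (r^2 * x0) (x1 / r^2) * aw_coeff r n (r^2 * x0) (x1 / r^2) j
      * ((1 - (r^4)^n / x0^2) * (1 - r^4 / x1^2 * (r^4)^j)) * ((1 - 1 / x0^2) * (1 - r^4 / x1^2))
    = (aw_prefactor r n (r^2 * x0) (x1 / r^2) * ((1 - (r^4)^n / x0^2) * (1 - r^4 / x1^2)))
      * (aw_coeff r n (r^2 * x0) (x1 / r^2) j * ((1 - 1 / x0^2) * (1 - r^4 / x1^2 * (r^4)^j)))"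
    by (simp add: mult_ac)
  also have "\<dots> = aw_prefactor r n x0 x1 * aw_coeff r n x0 x1 j
      * ((1 - r^4 / x1^2 * (r^4)^n) * (1 - (r^4)^j / x0^2)) * ((1 - 1 / x0^2) * (1 - r^4 / x1^2))"
    unfolding aw_prefactor_pm_shift[OF r(1)]
    using gY' gX' j qpoch_nonzero_mono by (subst aw_coeff_pm_shift[OF r]) (auto simp: mult_ac)
  finally show ?thesis
    using mult_right_cancel[OF yz] by blast
qed

lemma aw_coeff_ratio_pm:
  assumes "r \<noteq> 0"
  shows "aw_coeff_ratio r n (r^2 * x0) (x1 / r^2) t
     = r^4 * (1 - inverse ((r^4)^n) * t) * (1 - r^4 * (r^4)^n / (x0^2 * x1^2) * t)
       / ((1 - r^4 * t) * (1 - r^4 * t) * (1 - 1 / x0^2 * t) * (1 - r^4 * (r^4 / x1^2) * t))"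
  unfolding aw_coeff_ratio_def aw_params_raise(1)[OF assms] aw_params_pm(1)[OF assms]
  using assms by (simp add: power2_r2_mult power_divide)

lemma pm_coeff_identity:
  assumes r: "r \<noteq> 0" "norm (r^4) < 1"
    and gY: "AW_generic r n (r^2 * x0) (x1 / r^2)" and gX: "AW_generic r n x0 x1"
    and n: "n \<ge> 1" and j: "j \<le> n"
  shows "aw_prefactor r n (r^2 * x0) (x1 / r^2)
       * (aw_coeff r n (r^2 * x0) (x1 / r^2) j * alpha_pm r (x1^2) ((r^4)^j)
          + aw_coeff r n (r^2 * x0) (x1 / r^2) (Suc j) * beta_pm r (x1^2) ((r^4)^(Suc j)))
     = inverse (r ^ (4 * n + 6)) * (x1^2 - r ^ (4 * (n + 1)))^2
       * (aw_prefactor r n x0 x1 * aw_coeff r n x0 x1 j)"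
proof -
  define t T where "t = (r^4)^j" and "T = (r^4)^n"
  let ?PY = "aw_prefactor r n (r^2 * x0) (x1 / r^2)" and ?cY = "aw_coeff r n (r^2 * x0) (x1 / r^2) j"
  let ?PX = "aw_prefactor r n x0 x1" and ?cX = "aw_coeff r n x0 x1 j"
  let ?K = "(x1^2 - r^4 * T)^2 / (T * r^4 * r^2)"
  let ?E = "alpha_pm r (x1^2) t + aw_coeff_ratio r n (r^2 * x0) (x1 / r^2) t * beta_pm r (x1^2) (r^4 * t)"
  let ?G = "1 - r^4 / x1^2 * T" and ?D = "1 - t / x0^2"
  obtain p where p: "n = Suc p" using n by (cases n) auto
  note gY' = AW_generic_factor_nonzero[OF gY, unfolded aw_params_raise(1)[OF r(1)] aw_params_pm[OF r(1)]]
  have x: "x0 \<noteq> 0" "x1 \<noteq> 0" "t \<noteq> 0" "T \<noteq> 0" "1 - r^4 * t \<noteq> 0"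
    using AW_generic_nonzero[OF gX] power_ne_one_if_norm_less_one[of "r^4" "Suc j"] r
    by (auto simp: t_def T_def)
  have G: "?G \<noteq> 0"
    using gY'(2)[of p] by (simp add: p T_def algebra_simps)
  have D: "?D \<noteq> 0"
  proof (cases "j < n")
    case True then show ?thesis using gY'(1)[OF True] by (simp add: t_def)
  next
    case False
    then show ?thesis using j AW_generic_factor_nonzero(1)[OF gX, of p] by (simp add: p t_def algebra_simps)
  qed
  have "?G * ?D * ?E = ?K * ((1 - T / x0^2) * (1 - r^4 / x1^2 * t))"
    unfolding aw_coeff_ratio_pm[OF r(1)] T_def[symmetric]
  proof (rule pm_rational_identity[OF r(1) x(3,4) _ _ x(5)])
    show "x0^2 \<noteq> 0" "x1^2 \<noteq> 0" using x by simp_all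
    assume "t \<noteq> T"
    then have "j \<noteq> n" by (auto simp: t_def T_def)
    with j have "j < n" by simp
    then show "1 - 1 / x0^2 * t \<noteq> 0 \<and> 1 - r^4 * (r^4 / x1^2) * t \<noteq> 0"
      using gY'(1,2) by (simp add: t_def)
  qed
  then have "?PY * ?cY * ?E * (?G * ?D) = ?K * (?PX * ?cX) * (?G * ?D)"
    using aw_prefactor_coeff_pm_shift[OF r gY gX n j] by (simp add: t_def T_def mult_ac)
  moreover have "?G * ?D \<noteq> 0"
    using G D by simp
  ultimately have "?PY * ?cY * ?E = ?K * (?PX * ?cX)"
    using mult_right_cancel by blast
  moreover have "r ^ (4 * (n + 1)) = r^4 * T" "r ^ (4 * n + 6) = T * r^4 * r^2"
    unfolding T_def by (simp_all add: power_add power_mult)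
  ultimately show ?thesis
    unfolding aw_coeff_Suc t_def[symmetric] power_Suc by (simp add: divide_inverse algebra_simps)
qed

lemma d_pm_AWP:
  assumes r: "r \<noteq> 0" "norm (r^4) < 1"
    and x: "x \<noteq> 0" "x^2 \<noteq> 1" "r^2 * x \<noteq> 1" "r^2 * inverse x \<noteq> 1"
    and gY: "AW_generic r n (r^2 * x0) (x1 / r^2)" and gX: "AW_generic r n x0 x1" and n: "n \<ge> 1"
  shows "d_pm r x1 (\<lambda>y. AWP r n y (r^2 * x0) (x1 / r^2)) x
     = inverse (r ^ (4 * n + 6)) * (x1^2 - r ^ (4 * (n + 1)))^2 * AWP r n x x0 x1"
proof -
  let ?P = "aw_prefactor r n (r^2 * x0) (x1 / r^2)"
  let ?c = "aw_coeff r n (r^2 * x0) (x1 / r^2)"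
  let ?K = "inverse (r ^ (4 * n + 6)) * (x1^2 - r ^ (4 * (n + 1)))^2"
  let ?a = "\<lambda>k. alpha_pm r (x1^2) ((r^4)^k)" and ?b = "\<lambda>k. beta_pm r (x1^2) ((r^4)^k)"
  have "d_pm r x1 (\<lambda>y. AWP r n y (r^2 * x0) (x1 / r^2)) x
      = ?P * (\<Sum>k = 0..n. ?c k * d_pm r x1 (aw_basis r k) x)"
    unfolding AWP_eq_sum d_pm_eq_qdiff_op qdiff_op_scale qdiff_op_sum ..
  also have "\<dots> = ?P * ((\<Sum>k = 0..n. ?c k * ?a k * aw_basis r k x)
      + (\<Sum>k = 0..n. ?c k * ?b k * aw_basis r (k - 1) x))"
    unfolding d_pm_aw_basis[OF r(1) x] by (simp add: sum.distrib algebra_simps)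
  also have "(\<Sum>k = 0..n. ?c k * ?b k * aw_basis r (k - 1) x)
      = (\<Sum>k = 0..Suc n. ?c k * ?b k * aw_basis r (k - 1) x)"
    using aw_coeff_eq_0[OF r(1), of n "Suc n"] by simp
  also have "\<dots> = (\<Sum>j = 0..n. ?c (Suc j) * ?b (Suc j) * aw_basis r j x)"
    by (simp add: sum.atLeast0_atMost_Suc_shift beta_pm_def del: sum.cl_ivl_Suc)
  also have "?P * ((\<Sum>k = 0..n. ?c k * ?a k * aw_basis r k x) + \<dots>)
      = (\<Sum>j = 0..n. ?P * (?c j * ?a j + ?c (Suc j) * ?b (Suc j)) * aw_basis r j x)"
    by (simp add: sum.distrib sum_distrib_left algebra_simps)
  also have "\<dots> = (\<Sum>j = 0..n. ?K * (aw_prefactor r n x0 x1 * aw_coeff r n x0 x1 j) * aw_basis r j x)"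
    using pm_coeff_identity[OF r gY gX n] by (intro sum.cong refl) simp
  also have "\<dots> = ?K * AWP r n x x0 x1"
    unfolding AWP_eq_sum by (simp add: sum_distrib_left mult.assoc)
  finally show ?thesis .
qed

section \<open>The operator d_{-1,-1}\<close>

(* rho is aw_coeff_ratio in the variables q = r^4, T = q^n and Y_b = y_b^2. *)
lemma mm_rational_identity_0:
  fixes q T Y0 Y1 :: complex
  defines "\<rho> \<equiv> \<lambda>u. q * (1 - inverse T * u) * (1 - q * T / (Y0 * Y1) * u)
                 / ((1 - q * u) * (1 - q * u) * (1 - q / Y0 * u) * (1 - q / Y1 * u))"
  assumes "q \<noteq> 0" "T \<noteq> 0" "Y0 \<noteq> 0" "Y1 \<noteq> 0" "1 - q \<noteq> 0" "1 - q / Y0 \<noteq> 0" "1 - q / Y1 \<noteq> 0"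
  shows "alpha_mm q (q * Y0) (q * Y1) 1 + \<rho> 1 * beta_mm q (q * Y0) (q * Y1) q
     = - ((q * Y0 * (q * Y1) - q^2 * T) * (1 - q * T) * (q * Y0 - q) * (q * Y1 - q)) / (T * q^3)"
  using assms(2-) unfolding \<rho>_def
  by (simp add: alpha_mm_def beta_mm_def divide_simps) algebra

lemma mm_ratio_product:
  fixes q t T Y0 Y1 :: complex
  defines "\<rho> \<equiv> \<lambda>u. q * (1 - inverse T * u) * (1 - q * T / (Y0 * Y1) * u)
                 / ((1 - q * u) * (1 - q * u) * (1 - q / Y0 * u) * (1 - q / Y1 * u))"
  assumes nz: "q \<noteq> 0" "t \<noteq> 0" "T \<noteq> 0" "Y0 \<noteq> 0" "Y1 \<noteq> 0" "1 - q * t \<noteq> 0"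
    and t: "1 - q / Y0 * t \<noteq> 0" "1 - q / Y1 * t \<noteq> 0" "1 - q * (q * t) \<noteq> 0"
    and qt: "q * t \<noteq> T \<Longrightarrow> 1 - q / Y0 * (q * t) \<noteq> 0 \<and> 1 - q / Y1 * (q * t) \<noteq> 0"
  shows "\<rho> t * \<rho> (q * t) * beta_mm q (q * Y0) (q * Y1) (q * (q * t))
     = (1 - inverse T * t) * (1 - inverse T * (q * t)) * (1 - q * T / (Y0 * Y1) * t)
       * (1 - q * T / (Y0 * Y1) * (q * t)) * (Y0 * Y1)^2 / ((1 - q * t)^2 * t^2)"
proof (cases "q * t = T")
  case True
  then show ?thesis using nz(3) by (simp add: \<rho>_def)
next
  case False
  define a0 a1 b0 b1 where "a0 = 1 - q / Y0 * t" and "a1 = 1 - q / Y1 * t"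
    and "b0 = 1 - q / Y0 * (q * t)" and "b1 = 1 - q / Y1 * (q * t)"
  define u0 u1 v0 v1 where "u0 = 1 - inverse T * t" and "u1 = 1 - inverse T * (q * t)"
    and "v0 = 1 - q * T / (Y0 * Y1) * t" and "v1 = 1 - q * T / (Y0 * Y1) * (q * t)"
  define e0 e1 where "e0 = 1 - q * t" and "e1 = 1 - q * (q * t)"
  have "a0 \<noteq> 0" "a1 \<noteq> 0" "b0 \<noteq> 0" "b1 \<noteq> 0" "e0 \<noteq> 0" "e1 \<noteq> 0"
    using t nz(6) qt False by (auto simp: a0_def a1_def b0_def b1_def e0_def e1_def)
  moreover have factors: "q * Y0 - q * (q * t) = q * Y0 * a0" "q * Y0 - q * (q * (q * t)) = q * Y0 * b0"
    "q * Y1 - q * (q * t) = q * Y1 * a1" "q * Y1 - q * (q * (q * t)) = q * Y1 * b1"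
    using nz(4,5) by (simp_all add: a0_def a1_def b0_def b1_def field_simps)
  ultimately show ?thesis
    unfolding \<rho>_def beta_mm_def factors
    unfolding a0_def[symmetric] a1_def[symmetric] b0_def[symmetric] b1_def[symmetric]
      u0_def[symmetric] u1_def[symmetric] v0_def[symmetric] v1_def[symmetric]
      e0_def[symmetric] e1_def[symmetric]
    using nz by (simp add: field_simps power2_eq_square)
qed

lemma mm_rational_identity:
  fixes q t T Y0 Y1 :: complex
  defines "\<rho> \<equiv> \<lambda>u. q * (1 - inverse T * u) * (1 - q * T / (Y0 * Y1) * u)
                 / ((1 - q * u) * (1 - q * u) * (1 - q / Y0 * u) * (1 - q / Y1 * u))"
  assumes nz: "q \<noteq> 0" "t \<noteq> 0" "T \<noteq> 0" "Y0 \<noteq> 0" "Y1 \<noteq> 0" "1 - q * t \<noteq> 0"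
    and first: "t \<noteq> T \<Longrightarrow> 1 - q / Y0 * t \<noteq> 0 \<and> 1 - q / Y1 * t \<noteq> 0 \<and> 1 - q * (q * t) \<noteq> 0"
    and second: "t \<noteq> T \<Longrightarrow> q * t \<noteq> T \<Longrightarrow> 1 - q / Y0 * (q * t) \<noteq> 0 \<and> 1 - q / Y1 * (q * t) \<noteq> 0"
  shows "gamma_mm q (q * Y0) (q * Y1) t + \<rho> t * alpha_mm q (q * Y0) (q * Y1) (q * t)
       + \<rho> t * \<rho> (q * t) * beta_mm q (q * Y0) (q * Y1) (q * (q * t))
     = (q * Y0 * (q * Y1) - q^2 * T)^2 * (1 - q * T)^2 / (q^3 * T^2 * (1 - q * t)^2)"
proof (cases "t = T")
  case True
  then have "\<rho> t = 0" using nz(3) by (simp add: \<rho>_def)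
  then show ?thesis
    using True nz by (simp add: gamma_mm_def divide_simps)
next
  case False
  then have t: "1 - q / Y0 * t \<noteq> 0" "1 - q / Y1 * t \<noteq> 0" "1 - q * (q * t) \<noteq> 0"
    using first by auto
  have second_order: "\<rho> t * \<rho> (q * t) * beta_mm q (q * Y0) (q * Y1) (q * (q * t))
      = (1 - inverse T * t) * (1 - inverse T * (q * t)) * (1 - q * T / (Y0 * Y1) * t)
        * (1 - q * T / (Y0 * Y1) * (q * t)) * (Y0 * Y1)^2 / ((1 - q * t)^2 * t^2)"
    unfolding \<rho>_def by (rule mm_ratio_product[OF nz t]) (use second False in blast)
  show ?thesis
    unfolding second_order using nz t
    by (simp add: \<rho>_def gamma_mm_def alpha_mm_def divide_simps) algebra
qed

lemma mm_raise_factor_identity: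
  fixes r t y0 y1 :: complex
  assumes "r \<noteq> 0" "y0 \<noteq> 0" "y1 \<noteq> 0" "1 - r^4 * t \<noteq> 0"
    and "1 - 1 / y0^2 \<noteq> 0" "1 - 1 / y1^2 \<noteq> 0" "1 - (r^4)^n / (y0^2 * y1^2) \<noteq> 0"
  shows "inverse (r ^ (4 * n + 10)) * ((r^2 * y0)^2 * (r^2 * y1)^2 - r ^ (4 * (n + 2)))^2
      * (- (1 - r^4 * (r^4)^n) * (1 - 1 / y0^2) * (1 - 1 / y1^2) / (r^2 * (1 - (r^4)^n / (y0^2 * y1^2))))
      * (r^4 * (1 - inverse ((r^4)^(Suc n))) * (1 - (r^4)^n / (y0^2 * y1^2))
         / ((1 - r^4 * t)^2 * (1 - 1 / y0^2) * (1 - 1 / y1^2)))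
    = (r^4 * y0^2 * (r^4 * y1^2) - (r^4)^2 * (r^4)^n)^2 * (1 - r^4 * (r^4)^n)^2
      / ((r^4)^3 * ((r^4)^n)^2 * (1 - r^4 * t)^2)"
proof -
  define T A0 A1 W E where "T = (r^4)^n" and "A0 = 1 - 1 / y0^2" and "A1 = 1 - 1 / y1^2"
    and "W = 1 - T / (y0^2 * y1^2)" and "E = 1 - r^4 * t"
  have pw: "r ^ (4 * (n + 2)) = r^4 * r^4 * T" "r ^ (4 * n + 10) = r^4 * r^4 * T * r^2"
    "(r^4)^(Suc n) = r^4 * T"
    unfolding T_def by (simp_all add: power_add power_mult)
  have "A0 \<noteq> 0" "A1 \<noteq> 0" "W \<noteq> 0" "E \<noteq> 0" "T \<noteq> 0"
    using assms by (simp_all add: A0_def A1_def W_def E_def T_def)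
  then show ?thesis
    unfolding pw power2_r2_mult unfolding T_def[symmetric]
    unfolding A0_def[symmetric] A1_def[symmetric] W_def[symmetric] E_def[symmetric]
    using assms(1-3) by (simp add: field_simps) algebra
qed

lemma mm_coeff_identity_Suc:
  assumes r: "r \<noteq> 0" "norm (r^4) < 1"
    and gY: "AW_generic r n y0 y1" and gX: "AW_generic r (Suc n) (r^2 * y0) (r^2 * y1)" and i: "i \<le> n"
  shows "aw_prefactor r n y0 y1
       * (aw_coeff r n y0 y1 i * gamma_mm (r^4) ((r^2 * y0)^2) ((r^2 * y1)^2) ((r^4)^i)
          + aw_coeff r n y0 y1 (Suc i) * alpha_mm (r^4) ((r^2 * y0)^2) ((r^2 * y1)^2) ((r^4)^(Suc i))
          + aw_coeff r n y0 y1 (Suc (Suc i)) * beta_mm (r^4) ((r^2 * y0)^2) ((r^2 * y1)^2) ((r^4)^(Suc (Suc i))))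
     = inverse (r ^ (4 * n + 10)) * ((r^2 * y0)^2 * (r^2 * y1)^2 - r ^ (4 * (n + 2)))^2
       * (aw_prefactor r (Suc n) (r^2 * y0) (r^2 * y1) * aw_coeff r (Suc n) (r^2 * y0) (r^2 * y1) (Suc i))"
proof -
  let ?t = "(r^4)^i" and ?T = "(r^4)^n" and ?\<rho> = "aw_coeff_ratio r n y0 y1"
  let ?\<gamma> = "gamma_mm (r^4) (r^4 * y0^2) (r^4 * y1^2)" and ?\<alpha> = "alpha_mm (r^4) (r^4 * y0^2) (r^4 * y1^2)"
    and ?\<beta> = "beta_mm (r^4) (r^4 * y0^2) (r^4 * y1^2)"
  have y: "y0 \<noteq> 0" "y1 \<noteq> 0"
    using AW_generic_nonzero[OF gY] by simp_all
  have nz: "1 - 1 / y0^2 \<noteq> 0" "1 - 1 / y1^2 \<noteq> 0" "1 - ?T / (y0^2 * y1^2) \<noteq> 0"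
    using AW_generic_factor_nonzero[OF gX, of 0, unfolded aw_params_raise[OF r(1)]] by simp_all
  have t: "1 - r^4 * ?t \<noteq> 0" "1 - r^4 * (r^4 * ?t) \<noteq> 0"
    using power_ne_one_if_norm_less_one[of "r^4" "Suc i"] power_ne_one_if_norm_less_one[of "r^4" "Suc (Suc i)"] r(2)
    by auto
  have rational: "?\<gamma> ?t + ?\<rho> ?t * ?\<alpha> (r^4 * ?t) + ?\<rho> ?t * ?\<rho> (r^4 * ?t) * ?\<beta> (r^4 * (r^4 * ?t))
      = (r^4 * y0^2 * (r^4 * y1^2) - (r^4)^2 * ?T)^2 * (1 - r^4 * ?T)^2 / ((r^4)^3 * ?T^2 * (1 - r^4 * ?t)^2)"
    unfolding aw_coeff_ratio_def
  proof (rule mm_rational_identity)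
    show "r^4 \<noteq> 0" "?t \<noteq> 0" "?T \<noteq> 0" "y0^2 \<noteq> 0" "y1^2 \<noteq> 0" "1 - r^4 * ?t \<noteq> 0"
      using r(1) y t by simp_all
    assume "?t \<noteq> ?T"
    then have "i < n" using i by (cases "i = n") auto
    then show "1 - r^4 / y0^2 * ?t \<noteq> 0 \<and> 1 - r^4 / y1^2 * ?t \<noteq> 0 \<and> 1 - r^4 * (r^4 * ?t) \<noteq> 0"
      using AW_generic_factor_nonzero[OF gY] t by simp
    assume "r^4 * ?t \<noteq> ?T"
    then have "Suc i < n" using \<open>i < n\<close> by (cases "Suc i = n") auto
    then show "1 - r^4 / y0^2 * (r^4 * ?t) \<noteq> 0 \<and> 1 - r^4 / y1^2 * (r^4 * ?t) \<noteq> 0"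
      using AW_generic_factor_nonzero[OF gY \<open>Suc i < n\<close>] by simp
  qed
  have "aw_prefactor r n y0 y1
       * (aw_coeff r n y0 y1 i * gamma_mm (r^4) ((r^2 * y0)^2) ((r^2 * y1)^2) ((r^4)^i)
          + aw_coeff r n y0 y1 (Suc i) * alpha_mm (r^4) ((r^2 * y0)^2) ((r^2 * y1)^2) ((r^4)^(Suc i))
          + aw_coeff r n y0 y1 (Suc (Suc i)) * beta_mm (r^4) ((r^2 * y0)^2) ((r^2 * y1)^2) ((r^4)^(Suc (Suc i))))
      = aw_prefactor r n y0 y1 * aw_coeff r n y0 y1 i
        * (?\<gamma> ?t + ?\<rho> ?t * ?\<alpha> (r^4 * ?t) + ?\<rho> ?t * ?\<rho> (r^4 * ?t) * ?\<beta> (r^4 * (r^4 * ?t)))"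
    by (simp add: aw_coeff_Suc power2_r2_mult algebra_simps)
  also have "\<dots> = inverse (r ^ (4 * n + 10)) * ((r^2 * y0)^2 * (r^2 * y1)^2 - r ^ (4 * (n + 2)))^2
       * (aw_prefactor r (Suc n) (r^2 * y0) (r^2 * y1) * aw_coeff r (Suc n) (r^2 * y0) (r^2 * y1) (Suc i))"
    unfolding rational aw_prefactor_Suc_raise[OF r(1)] aw_coeff_Suc_raise[OF r(1)]
    unfolding mm_raise_factor_identity[OF r(1) y t(1) nz, symmetric]
    by (simp only: mult_ac)
  finally show ?thesis .
qed

lemma mm_raise_factor_identity_0:
  fixes r y0 y1 :: complex
  assumes "r \<noteq> 0" "y0 \<noteq> 0" "y1 \<noteq> 0" "1 - (r^4)^n / (y0^2 * y1^2) \<noteq> 0"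
  shows "inverse (r ^ (4 * n + 10)) * ((r^2 * y0)^2 * (r^2 * y1)^2 - r ^ (4 * (n + 2)))^2
      * (- (1 - r^4 * (r^4)^n) * (1 - 1 / y0^2) * (1 - 1 / y1^2) / (r^2 * (1 - (r^4)^n / (y0^2 * y1^2))))
    = - ((r^4 * y0^2 * (r^4 * y1^2) - (r^4)^2 * (r^4)^n) * (1 - r^4 * (r^4)^n)
         * (r^4 * y0^2 - r^4) * (r^4 * y1^2 - r^4)) / ((r^4)^n * (r^4)^3)"
proof -
  define T W where "T = (r^4)^n" and "W = y0^2 * y1^2 - T"
  have pw: "r ^ (4 * (n + 2)) = r^4 * r^4 * T" "r ^ (4 * n + 10) = r^4 * r^4 * T * r^2"
    unfolding T_def by (simp_all add: power_add power_mult)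
  have W: "1 - T / (y0^2 * y1^2) = W / (y0^2 * y1^2)"
    "r^4 * y0^2 * (r^4 * y1^2) - r^4 * r^4 * T = r^4 * r^4 * W"
    "r^4 * y0^2 * (r^4 * y1^2) - (r^4)^2 * T = r^4 * r^4 * W"
    using assms(2,3) by (simp_all add: W_def field_simps power2_eq_square)
  have "W \<noteq> 0" "T \<noteq> 0"
    using assms by (auto simp: W_def T_def field_simps)
  then show ?thesis
    unfolding pw power2_r2_mult unfolding T_def[symmetric] W
    using assms(1-3) by (simp add: field_simps) algebra
qed

lemma mm_coeff_identity_0:
  assumes r: "r \<noteq> 0" "norm (r^4) < 1"
    and gY: "AW_generic r n y0 y1" and gX: "AW_generic r (Suc n) (r^2 * y0) (r^2 * y1)" and n: "n \<ge> 1"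
  shows "aw_prefactor r n y0 y1
       * (aw_coeff r n y0 y1 0 * alpha_mm (r^4) ((r^2 * y0)^2) ((r^2 * y1)^2) ((r^4)^0)
          + aw_coeff r n y0 y1 (Suc 0) * beta_mm (r^4) ((r^2 * y0)^2) ((r^2 * y1)^2) ((r^4)^(Suc 0)))
     = inverse (r ^ (4 * n + 10)) * ((r^2 * y0)^2 * (r^2 * y1)^2 - r ^ (4 * (n + 2)))^2
       * (aw_prefactor r (Suc n) (r^2 * y0) (r^2 * y1) * aw_coeff r (Suc n) (r^2 * y0) (r^2 * y1) 0)"
proof -
  have y: "y0 \<noteq> 0" "y1 \<noteq> 0"
    using AW_generic_nonzero[OF gY] by simp_all
  have nz: "1 - (r^4)^n / (y0^2 * y1^2) \<noteq> 0"
    using AW_generic_factor_nonzero(3)[OF gX, of 0, unfolded aw_params_raise[OF r(1)]] by simp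
  have rational: "alpha_mm (r^4) (r^4 * y0^2) (r^4 * y1^2) 1
      + aw_coeff_ratio r n y0 y1 1 * beta_mm (r^4) (r^4 * y0^2) (r^4 * y1^2) (r^4)
    = - ((r^4 * y0^2 * (r^4 * y1^2) - (r^4)^2 * (r^4)^n) * (1 - r^4 * (r^4)^n)
         * (r^4 * y0^2 - r^4) * (r^4 * y1^2 - r^4)) / ((r^4)^n * (r^4)^3)"
    unfolding aw_coeff_ratio_def
  proof (rule mm_rational_identity_0)
    show "r^4 \<noteq> 0" "(r^4)^n \<noteq> 0" "y0^2 \<noteq> 0" "y1^2 \<noteq> 0" "1 - r^4 \<noteq> 0"
      using r y power_ne_one_if_norm_less_one[of "r^4" 1] by auto
    show "1 - r^4 / y0^2 \<noteq> 0" "1 - r^4 / y1^2 \<noteq> 0"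
      using AW_generic_factor_nonzero[OF gY, of 0] n by simp_all
  qed
  have "aw_prefactor r n y0 y1
       * (aw_coeff r n y0 y1 0 * alpha_mm (r^4) ((r^2 * y0)^2) ((r^2 * y1)^2) ((r^4)^0)
          + aw_coeff r n y0 y1 (Suc 0) * beta_mm (r^4) ((r^2 * y0)^2) ((r^2 * y1)^2) ((r^4)^(Suc 0)))
      = aw_prefactor r n y0 y1 * (alpha_mm (r^4) (r^4 * y0^2) (r^4 * y1^2) 1
          + aw_coeff_ratio r n y0 y1 1 * beta_mm (r^4) (r^4 * y0^2) (r^4 * y1^2) (r^4))"
    by (simp add: aw_coeff_Suc power2_r2_mult)
  also have "\<dots> = inverse (r ^ (4 * n + 10)) * ((r^2 * y0)^2 * (r^2 * y1)^2 - r ^ (4 * (n + 2)))^2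
       * (aw_prefactor r (Suc n) (r^2 * y0) (r^2 * y1) * aw_coeff r (Suc n) (r^2 * y0) (r^2 * y1) 0)"
    unfolding rational aw_prefactor_Suc_raise[OF r(1)] aw_coeff_0
    unfolding mm_raise_factor_identity_0[OF r(1) y nz, symmetric]
    by (simp only: mult_ac mult_1_left)
  finally show ?thesis .
qed

lemma d_mm_AWP:
  assumes r: "r \<noteq> 0" "norm (r^4) < 1"
    and x: "x \<noteq> 0" "x^2 \<noteq> 1" "r^2 * x \<noteq> 1" "r^2 * inverse x \<noteq> 1"
    and gY: "AW_generic r n y0 y1" and gX: "AW_generic r (Suc n) (r^2 * y0) (r^2 * y1)" and n: "n \<ge> 1"
  shows "d_mm r (r^2 * y0) (r^2 * y1) (\<lambda>y. AWP r n y y0 y1) x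
     = inverse (r ^ (4 * n + 10)) * ((r^2 * y0)^2 * (r^2 * y1)^2 - r ^ (4 * (n + 2)))^2
       * AWP r (Suc n) x (r^2 * y0) (r^2 * y1)"
proof -
  let ?P = "aw_prefactor r n y0 y1" and ?c = "aw_coeff r n y0 y1"
  let ?K = "inverse (r ^ (4 * n + 10)) * ((r^2 * y0)^2 * (r^2 * y1)^2 - r ^ (4 * (n + 2)))^2"
  let ?g = "\<lambda>k. gamma_mm (r^4) ((r^2 * y0)^2) ((r^2 * y1)^2) ((r^4)^k)"
    and ?a = "\<lambda>k. alpha_mm (r^4) ((r^2 * y0)^2) ((r^2 * y1)^2) ((r^4)^k)"
    and ?b = "\<lambda>k. beta_mm (r^4) ((r^2 * y0)^2) ((r^2 * y1)^2) ((r^4)^k)"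
  let ?\<phi> = "\<lambda>k. aw_basis r k x"
  have "d_mm r (r^2 * y0) (r^2 * y1) (\<lambda>y. AWP r n y y0 y1) x
      = ?P * (\<Sum>k = 0..n. ?c k * d_mm r (r^2 * y0) (r^2 * y1) (aw_basis r k) x)"
    unfolding AWP_eq_sum d_mm_eq_qdiff_op qdiff_op_scale qdiff_op_sum ..
  also have "\<dots> = ?P * ((\<Sum>k = 0..n. ?c k * ?g k * ?\<phi> (Suc k)) + (\<Sum>k = 0..n. ?c k * ?a k * ?\<phi> k)
      + (\<Sum>k = 0..n. ?c k * ?b k * ?\<phi> (k - 1)))"
    unfolding d_mm_aw_basis[OF r(1) x] by (simp add: sum.distrib algebra_simps)
  also have "(\<Sum>k = 0..n. ?c k * ?g k * ?\<phi> (Suc k))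
      = (\<Sum>j = 0..Suc n. (if j = 0 then 0 else ?c (j - 1) * ?g (j - 1)) * ?\<phi> j)"
    by (simp add: sum.atLeast0_atMost_Suc_shift del: sum.cl_ivl_Suc)
  also have "(\<Sum>k = 0..n. ?c k * ?a k * ?\<phi> k) = (\<Sum>j = 0..Suc n. ?c j * ?a j * ?\<phi> j)"
    using aw_coeff_eq_0[OF r(1), of n "Suc n"] by simp
  also have "(\<Sum>k = 0..n. ?c k * ?b k * ?\<phi> (k - 1)) = (\<Sum>k = 0..Suc (Suc n). ?c k * ?b k * ?\<phi> (k - 1))"
    using aw_coeff_eq_0[OF r(1), of n "Suc n"] aw_coeff_eq_0[OF r(1), of n "Suc (Suc n)"] by simp
  also have "\<dots> = (\<Sum>j = 0..Suc n. ?c (Suc j) * ?b (Suc j) * ?\<phi> j)"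
    by (simp add: sum.atLeast0_atMost_Suc_shift beta_mm_def del: sum.cl_ivl_Suc)
  also have "?P * ((\<Sum>j = 0..Suc n. (if j = 0 then 0 else ?c (j - 1) * ?g (j - 1)) * ?\<phi> j)
      + (\<Sum>j = 0..Suc n. ?c j * ?a j * ?\<phi> j) + (\<Sum>j = 0..Suc n. ?c (Suc j) * ?b (Suc j) * ?\<phi> j))
      = (\<Sum>j = 0..Suc n. ?P * ((if j = 0 then 0 else ?c (j - 1) * ?g (j - 1))
          + ?c j * ?a j + ?c (Suc j) * ?b (Suc j)) * ?\<phi> j)"
    by (simp add: sum.distrib[symmetric] sum_distrib_left algebra_simps)
  also have "\<dots> = (\<Sum>j = 0..Suc n. ?K * (aw_prefactor r (Suc n) (r^2 * y0) (r^2 * y1)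
      * aw_coeff r (Suc n) (r^2 * y0) (r^2 * y1) j) * ?\<phi> j)"
  proof (intro sum.cong refl)
    fix j assume "j \<in> {0..Suc n}"
    then show "?P * ((if j = 0 then 0 else ?c (j - 1) * ?g (j - 1)) + ?c j * ?a j + ?c (Suc j) * ?b (Suc j))
        * ?\<phi> j = ?K * (aw_prefactor r (Suc n) (r^2 * y0) (r^2 * y1)
        * aw_coeff r (Suc n) (r^2 * y0) (r^2 * y1) j) * ?\<phi> j"
      using mm_coeff_identity_0[OF r gY gX n] mm_coeff_identity_Suc[OF r gY gX]
      by (cases j) simp_all
  qed
  also have "\<dots> = ?K * AWP r (Suc n) x (r^2 * y0) (r^2 * y1)"
    unfolding AWP_eq_sum by (simp add: sum_distrib_left mult.assoc del: sum.cl_ivl_Suc)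
  finally show ?thesis .
qed

lemma d_mp_AWP:
  assumes r: "r \<noteq> 0" "norm (r^4) < 1"
    and x: "x \<noteq> 0" "x^2 \<noteq> 1" "r^2 * x \<noteq> 1" "r^2 * inverse x \<noteq> 1"
    and gY: "AW_generic r n (x0 / r^2) (r^2 * x1)" and gX: "AW_generic r n x0 x1" and n: "n \<ge> 1"
  shows "d_mp r x0 (\<lambda>y. AWP r n y (x0 / r^2) (r^2 * x1)) x
     = inverse (r ^ (4 * n + 6)) * (x0^2 - r ^ (4 * (n + 1)))^2 * AWP r n x x0 x1"
proof -
  have "AW_generic r n (r^2 * x1) (x0 / r^2)" "AW_generic r n x1 x0"
    using gY gX AW_generic_swap by blast+
  from d_pm_AWP[OF r x this n] show ?thesis
    unfolding d_mp_eq_d_pm by (simp add: AWP_swap[of r n _ "x0 / r^2"] AWP_swap[of r n x x1 x0])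
qed

theorem mainTheorem8:
  fixes r x x0 x1 :: complex and n :: nat
  assumes q: "0 < norm (r ^ 4)" "norm (r ^ 4) < 1"
    and n: "n \<ge> 1"
    and x: "x \<noteq> 0" "x\<^sup>2 \<noteq> 1" "r ^ 2 * x \<noteq> 1" "r ^ 2 * inverse x \<noteq> 1"
  shows
   "(AW_generic r n (r ^ 2 * x0) (r ^ 2 * x1) \<and> AW_generic r (n - 1) x0 x1 \<longrightarrow>
      d_pp r (\<lambda>y. AWP r n y (r ^ 2 * x0) (r ^ 2 * x1)) x
        = inverse (r ^ (4 * n + 2)) * (1 - r ^ (4 * n))\<^sup>2 * AWP r (n - 1) x x0 x1)
  \<and> (AW_generic r n (r ^ 2 * x0) (x1 / r ^ 2) \<and> AW_generic r n x0 x1 \<longrightarrow>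
      d_pm r x1 (\<lambda>y. AWP r n y (r ^ 2 * x0) (x1 / r ^ 2)) x
        = inverse (r ^ (4 * n + 6)) * (x1\<^sup>2 - r ^ (4 * (n + 1)))\<^sup>2 * AWP r n x x0 x1)
  \<and> (AW_generic r n (x0 / r ^ 2) (r ^ 2 * x1) \<and> AW_generic r n x0 x1 \<longrightarrow>
      d_mp r x0 (\<lambda>y. AWP r n y (x0 / r ^ 2) (r ^ 2 * x1)) x
        = inverse (r ^ (4 * n + 6)) * (x0\<^sup>2 - r ^ (4 * (n + 1)))\<^sup>2 * AWP r n x x0 x1)
  \<and> (AW_generic r n (x0 / r ^ 2) (x1 / r ^ 2) \<and> AW_generic r (n + 1) x0 x1 \<longrightarrow>
      d_mm r x0 x1 (\<lambda>y. AWP r n y (x0 / r ^ 2) (x1 / r ^ 2)) x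
        = inverse (r ^ (4 * n + 10)) * (x0\<^sup>2 * x1\<^sup>2 - r ^ (4 * (n + 2)))\<^sup>2
            * AWP r (n + 1) x x0 x1)"
proof -
  have r: "r \<noteq> 0" "norm (r ^ 4) < 1"
    using q by auto
  obtain m where m: "n = Suc m"
    using n by (cases n) auto
  show ?thesis
    using d_pp_AWP[OF r x, of m x0 x1] d_pm_AWP[OF r x _ _ n] d_mp_AWP[OF r x _ _ n]
      d_mm_AWP[OF r x _ _ n, of "x0 / r ^ 2" "x1 / r ^ 2"] r(1)
    by (simp add: m)
qed

end
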